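(* Let $l>0$ and let $b:[0,l]\to\mathbb{R}$ be a continuous bathymetry profile. For a function $f$ on $[0,l]$ write $\overline{f}=\frac{1}{l}\int_0^l f(y)\,dy$. Define $$S(y)=\int_0^y\big(\overline{b}-b(s)\big)\,ds,\qquad \sigma(y)=\overline{S}-S(y),\qquad \chi=\overline{S^2}-\overline{S}^2,$$ so that $\frac{d\sigma}{dy}=b(y)-\overline{b}$. Let $\tau(t,x)>0$ and $u(t,x)$ be smooth functions and for any $f(t,x)$ write $\dot f=f_t+uf_x$. Assume $1-\tau\frac{d\sigma}{dy}(y)>0$ for all $y$ and $(t,x)$, and define $$M(t,x,y)=\int_0^y\left(\frac{\sigma(s)\,\ddot\tau}{1-\tau\frac{d\sigma}{ds}(s)}+\frac{\sigma(s)\frac{d\sigma}{ds}(s)\,\dot\tau^2}{\big(1-\tau\frac{d\sigma}{ds}(s)\big)^2}\right)ds+\frac{\sigma(y)^2\,\dot\tau^2}{2\big(1-\tau\frac{d\sigma}{dy}(y)\big)^2}.$$ Suppose the channel is wide in the sense that $\tau\frac{d\sigma}{dy}=\mathcal{O}(\varepsilon^\gamma)$ for some $\gamma>0$. Then, with the Lagrangian $$\mathcal{L}(\tau,\dot\tau)=-\chi\frac{\dot\tau^2}{2},$$ one has $$\overline{M\,\frac{d\sigma}{dy}}=-\left(\frac{\partial\mathcal{L}}{\partial\tau}-\frac{D}{Dt}\left(\frac{\partial\mathcal{L}}{\partial\dot\tau}\right)\right)+\mathcal{O}(\varepsilon^\gamma),$$ where $\frac{D}{Dt}=\partial_t+u\partial_x$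 and $\overline{M\frac{d\sigma}{dy}}=\frac1l\int_0^l M\,\frac{d\sigma}{dy}\,dy$.
   Context: This arises from transverse averaging of the 2D shallow water equations in a prismatic channel of width $l$ with bathymetry $b(y)$; $\varepsilon>0$ is a small parameter (ratio of transverse to longitudinal length scales), $\tau=1/\overline{h}$ is the inverse of the section-averaged depth and $u$ the averaged longitudinal velocity. $\mathcal{O}(\varepsilon^\gamma)$ denotes terms bounded by a constant times $\varepsilon^\gamma$ as $\varepsilon\to0$. *)

theory Defs
  imports "HOL-Analysis.Analysis"
begin

definition avg :: "real \<Rightarrow> (real \<Rightarrow> real) \<Rightarrow> real" where
  "avg l f = integral {0..l} f / l"

definition Sfun :: "real \<Rightarrow> (real \<Rightarrow> real) \<Rightarrow> real \<Rightarrow> real" where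
  "Sfun l b y = integral {0..y} (\<lambda>s. avg l b - b s)"

definition sigma :: "real \<Rightarrow> (real \<Rightarrow> real) \<Rightarrow> real \<Rightarrow> real" where
  "sigma l b y = avg l (Sfun l b) - Sfun l b y"

text \<open>d sigma / dy, which equals b(y) minus the mean of b (as stated in the paper).\<close>
definition dsigma :: "real \<Rightarrow> (real \<Rightarrow> real) \<Rightarrow> real \<Rightarrow> real" where
  "dsigma l b y = b y - avg l b"

definition chi :: "real \<Rightarrow> (real \<Rightarrow> real) \<Rightarrow> real" where
  "chi l b = avg l (\<lambda>y. (Sfun l b y)^2) - (avg l (Sfun l b))^2"

definition matdot :: "(real \<Rightarrow> real \<Rightarrow> real) \<Rightarrow> (real \<Rightarrow> real \<Rightarrow> real) \<Rightarrow> real \<Rightarrow> real \<Rightarrow> real" where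
  "matdot u f t x = deriv (\<lambda>s. f s x) t + u t x * deriv (\<lambda>z. f t z) x"

definition Mfun :: "real \<Rightarrow> (real \<Rightarrow> real) \<Rightarrow> (real \<Rightarrow> real \<Rightarrow> real) \<Rightarrow> (real \<Rightarrow> real \<Rightarrow> real)
    \<Rightarrow> real \<Rightarrow> real \<Rightarrow> real \<Rightarrow> real" where
  "Mfun l b tau u t x y =
     integral {0..y} (\<lambda>s. sigma l b s * matdot u (matdot u tau) t x / (1 - tau t x * dsigma l b s)
        + sigma l b s * dsigma l b s * (matdot u tau t x)^2 / (1 - tau t x * dsigma l b s)^2)
     + (sigma l b y)^2 * (matdot u tau t x)^2 / (2 * (1 - tau t x * dsigma l b y)^2)"

definition Lag :: "real \<Rightarrow> (real \<Rightarrow> real) \<Rightarrow> real \<Rightarrow> real \<Rightarrow> real" where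
  "Lag l b p q = - chi l b * q^2 / 2"

definition EL :: "real \<Rightarrow> (real \<Rightarrow> real) \<Rightarrow> (real \<Rightarrow> real \<Rightarrow> real) \<Rightarrow> (real \<Rightarrow> real \<Rightarrow> real)
    \<Rightarrow> real \<Rightarrow> real \<Rightarrow> real" where
  "EL l b tau u t x =
     deriv (\<lambda>p. Lag l b p (matdot u tau t x)) (tau t x)
     - matdot u (\<lambda>t' x'. deriv (\<lambda>q. Lag l b (tau t' x') q) (matdot u tau t' x')) t x"

end

(* Write F(y) = int_0^y sigma and q = 1 / (1 - tau sigma'). At tau = 0 (q = 1) the integrand of M
   is sigma tau'' + sigma sigma' tau'^2, so M = tau'' F + tau'^2 (sigma^2 - sigma(0)^2 / 2). Since
   F(l) = 0, integration by parts gives mean(F sigma') = -mean(sigma^2) = -chi (as sigma = mean(S) - S),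
   and since sigma(l) = sigma(0) the exact derivative (sigma^2 - c) sigma' has mean zero. Hence at
   tau = 0, mean(M sigma') = -chi tau'', which is exactly minus the Euler-Lagrange expression.
   For |tau sigma'| <= 1/2 both q - 1 and q^2 - 1 are O(tau sigma') = O(eps^gamma), uniformly as
   long as b, tau' and tau'' stay bounded; this gives the error term. *)

theory Submission
  imports Defs
begin

lemma fundamental_theorem_of_calculus_real:
  fixes f f' :: "real \<Rightarrow> real"
  assumes "a \<le> b" and "\<And>x. x \<in> {a..b} \<Longrightarrow> (f has_real_derivative f' x) (at x within {a..b})"
  shows "(f' has_integral (f b - f a)) {a..b}"
  using assms by (intro fundamental_theorem_of_calculus)
    (simp_all add: has_real_derivative_iff_has_vector_derivative)

lemma abs_avg_le:
  assumes "l > 0" and "continuous_on {0..l} f" and "\<And>y. y \<in> {0..l} \<Longrightarrow> \<bar>f y\<bar> \<le> A"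
  shows "\<bar>avg l f\<bar> \<le> A"
proof -
  have "norm (integral {0..l} f) \<le> A * (l - 0)"
    using assms by (intro integral_bound) auto
  then show ?thesis
    using \<open>l > 0\<close> by (simp add: avg_def field_simps)
qed

lemma abs_mult_le_mult:
  fixes a c :: "'a :: linordered_idom"
  assumes "\<bar>a\<bar> \<le> A" and "\<bar>c\<bar> \<le> C"
  shows "\<bar>a * c\<bar> \<le> A * C"
  using assms by (simp add: abs_mult mult_mono')

lemma avg_lincomb:
  assumes "f integrable_on {0..l}" and "g integrable_on {0..l}"
  shows "avg l (\<lambda>y. a * f y + c * g y) = a * avg l f + c * avg l g"
  using assms by (simp add: avg_def integral_add integrable_on_mult_right add_divide_distrib)

lemma abs_inverse_one_minus_sub_one_le:
  fixes r :: real
  assumes "\<bar>r\<bar> \<le> 1/2"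
  shows "\<bar>1 / (1 - r) - 1\<bar> \<le> 2 * \<bar>r\<bar>"
proof -
  have "1 / (1 - r) - 1 = r / (1 - r)"
    using assms by (simp add: field_simps)
  also have "\<bar>\<dots>\<bar> \<le> \<bar>r\<bar> / (1/2)"
    unfolding abs_divide using assms by (intro divide_left_mono) auto
  finally show ?thesis
    by simp
qed

lemma abs_inverse_one_minus_square_sub_one_le:
  fixes r :: real
  assumes "\<bar>r\<bar> \<le> 1/2"
  shows "\<bar>1 / (1 - r)^2 - 1\<bar> \<le> 10 * \<bar>r\<bar>"
proof -
  have "(1/2)^2 \<le> (1 - r)^2"
    using assms by (intro power_mono) auto
  then have q: "1/4 \<le> (1 - r)^2"
    by (simp add: power2_eq_square)
  have "1 / (1 - r)^2 - 1 = r * (2 - r) / (1 - r)^2"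
    using assms by (simp add: divide_simps) (simp add: power2_eq_square algebra_simps)
  also have "\<bar>\<dots>\<bar> \<le> \<bar>r\<bar> * (5/2) / (1/4)"
    unfolding abs_divide abs_mult using assms q
    by (intro frac_le mult_left_mono) auto
  finally show ?thesis
    by simp
qed

text \<open>\<open>M(t, x, \<cdot>)\<close> depends on \<open>(t, x)\<close> only through \<open>T = \<tau>\<close>, \<open>P = \<tau>''\<close> and \<open>V = \<tau>'\<close>.\<close>
definition Mintegrand :: "real \<Rightarrow> (real \<Rightarrow> real) \<Rightarrow> real \<Rightarrow> real \<Rightarrow> real \<Rightarrow> real \<Rightarrow> real" where
  "Mintegrand l b T P V s =
     sigma l b s * P / (1 - T * dsigma l b s) + sigma l b s * dsigma l b s * V^2 / (1 - T * dsigma l b s)^2"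

definition Mprofile :: "real \<Rightarrow> (real \<Rightarrow> real) \<Rightarrow> real \<Rightarrow> real \<Rightarrow> real \<Rightarrow> real \<Rightarrow> real" where
  "Mprofile l b T P V y =
     integral {0..y} (Mintegrand l b T P V) + (sigma l b y)^2 * V^2 / (2 * (1 - T * dsigma l b y)^2)"

lemma Mfun_eq_Mprofile:
  "Mfun l b tau u t x y = Mprofile l b (tau t x) (matdot u (matdot u tau) t x) (matdot u tau t x) y"
  unfolding Mfun_def Mprofile_def Mintegrand_def ..

context
  fixes l :: real and b :: "real \<Rightarrow> real"
  assumes l_pos: "l > 0" and b_cont: "continuous_on {0..l} b"
begin

lemma continuous_on_dsigma: "continuous_on {0..l} (dsigma l b)"
  unfolding dsigma_def by (intro continuous_intros b_cont)

lemma continuous_on_Sfun: "continuous_on {0..l} (Sfun l b)"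
  unfolding Sfun_def[abs_def]
  by (intro indefinite_integral_continuous_1 integrable_continuous_real continuous_intros b_cont)

lemma sigma_has_derivative:
  assumes "y \<in> {0..l}"
  shows "(sigma l b has_real_derivative dsigma l b y) (at y within {0..l})"
proof -
  have "(Sfun l b has_real_derivative avg l b - b y) (at y within {0..l})"
    unfolding Sfun_def[abs_def]
    by (intro integral_has_real_derivative continuous_intros b_cont assms)
  then show ?thesis
    unfolding sigma_def[abs_def] dsigma_def by (auto intro!: derivative_eq_intros)
qed

lemma continuous_on_sigma: "continuous_on {0..l} (sigma l b)"
  unfolding sigma_def[abs_def] by (intro continuous_intros continuous_on_Sfun)

lemma sigma_right_eq_left: "sigma l b l = sigma l b 0"
proof -
  have "Sfun l b l = integral {0..l} (\<lambda>s. avg l b) - integral {0..l} b"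
    unfolding Sfun_def by (intro integral_diff integrable_continuous_real b_cont) auto
  also have "\<dots> = 0"
    using l_pos by (simp add: avg_def)
  finally show ?thesis
    by (simp add: sigma_def Sfun_def)
qed

lemma integral_sigma: "integral {0..l} (sigma l b) = 0"
proof -
  have "integral {0..l} (sigma l b)
      = integral {0..l} (\<lambda>y. avg l (Sfun l b)) - integral {0..l} (Sfun l b)"
    unfolding sigma_def[abs_def]
    by (intro integral_diff integrable_continuous_real continuous_on_Sfun) auto
  then show ?thesis
    using l_pos by (simp add: avg_def)
qed

lemma integral_sigma_square: "integral {0..l} (\<lambda>y. (sigma l b y)^2) = l * chi l b"
proof -
  define c where "c = avg l (Sfun l b)"
  have int_S: "integral {0..l} (Sfun l b) = l * c"
    using l_pos by (simp add: c_def avg_def)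
  have "integral {0..l} (\<lambda>y. (sigma l b y)^2)
      = integral {0..l} (\<lambda>y. c^2 - 2 * c * Sfun l b y + (Sfun l b y)^2)"
    by (simp add: sigma_def c_def power2_eq_square algebra_simps)
  also have "\<dots> = l * c^2 - 2 * c * (l * c) + integral {0..l} (\<lambda>y. (Sfun l b y)^2)"
    using has_integral_const_real[of "c^2" 0 l] l_pos unfolding int_S[symmetric]
    by (intro integral_unique has_integral_add has_integral_diff has_integral_mult_right
        integrable_integral integrable_continuous_real continuous_intros continuous_on_Sfun)
      (auto simp: mult.commute)
  also have "\<dots> = l * chi l b"
    using l_pos unfolding chi_def c_def[symmetric] by (simp add: avg_def field_simps power2_eq_square)
  finally show ?thesis .
qed

lemma avg_integral_sigma_mult_dsigma:
  "avg l (\<lambda>y. integral {0..y} (sigma l b) * dsigma l b y) = - chi l b"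
proof -
  define F where "F y = integral {0..y} (sigma l b)" for y
  have F_deriv: "(F has_real_derivative sigma l b y) (at y within {0..l})" if "y \<in> {0..l}" for y
    unfolding F_def[abs_def] by (intro integral_has_real_derivative continuous_on_sigma that)
  have "((\<lambda>y. (sigma l b y)^2 + F y * dsigma l b y) has_integral F l * sigma l b l - F 0 * sigma l b 0) {0..l}"
    using l_pos
    by (intro fundamental_theorem_of_calculus_real)
      (auto intro!: derivative_eq_intros F_deriv sigma_has_derivative simp: power2_eq_square)
  then have "integral {0..l} (\<lambda>y. (sigma l b y)^2 + F y * dsigma l b y) = 0"
    by (simp add: F_def integral_sigma integral_unique)
  moreover have "continuous_on {0..l} F"
    unfolding F_def[abs_def]
    by (intro indefinite_integral_continuous_1 integrable_continuous_real continuous_on_sigma)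
  then have "integral {0..l} (\<lambda>y. (sigma l b y)^2 + F y * dsigma l b y)
      = integral {0..l} (\<lambda>y. (sigma l b y)^2) + integral {0..l} (\<lambda>y. F y * dsigma l b y)"
    by (intro integral_add integrable_continuous_real continuous_intros continuous_on_sigma
        continuous_on_dsigma)
  ultimately show ?thesis
    using l_pos by (simp add: F_def avg_def integral_sigma_square field_simps)
qed

lemma integral_sigma_mult_dsigma:
  assumes "y \<in> {0..l}"
  shows "integral {0..y} (\<lambda>s. sigma l b s * dsigma l b s) = ((sigma l b y)^2 - (sigma l b 0)^2) / 2"
proof -
  have "((\<lambda>s. sigma l b s * dsigma l b s) has_integral (sigma l b y)^2 / 2 - (sigma l b 0)^2 / 2) {0..y}"
  proof (intro fundamental_theorem_of_calculus_real)
    fix s assume "s \<in> {0..y}"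
    with assms have "(sigma l b has_real_derivative dsigma l b s) (at s within {0..y})"
      by (intro has_field_derivative_subset[OF sigma_has_derivative]) auto
    then show "((\<lambda>s. (sigma l b s)^2 / 2) has_real_derivative sigma l b s * dsigma l b s) (at s within {0..y})"
      by (auto intro!: derivative_eq_intros)
  qed (use assms in auto)
  then show ?thesis
    by (simp add: integral_unique diff_divide_distrib)
qed

lemma avg_sigma_square_diff_mult_dsigma: "avg l (\<lambda>y. ((sigma l b y)^2 - c) * dsigma l b y) = 0"
proof -
  have "((\<lambda>y. ((sigma l b y)^2 - c) * dsigma l b y) has_integral
      ((sigma l b l)^3 / 3 - c * sigma l b l) - ((sigma l b 0)^3 / 3 - c * sigma l b 0)) {0..l}"
    using l_pos
    by (intro fundamental_theorem_of_calculus_real)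
      (auto intro!: derivative_eq_intros sigma_has_derivative simp: power2_eq_square algebra_simps)
  then show ?thesis
    by (simp add: avg_def sigma_right_eq_left integral_unique)
qed

lemma Mprofile_zero:
  assumes "y \<in> {0..l}"
  shows "Mprofile l b 0 P V y
    = P * integral {0..y} (sigma l b) + V^2 * ((sigma l b y)^2 - (sigma l b 0)^2 / 2)"
proof -
  have int: "f integrable_on {0..y}" if "continuous_on {0..l} f" for f :: "real \<Rightarrow> real"
    using assms by (intro integrable_on_subinterval[OF integrable_continuous_real[OF that]]) auto
  have "Mprofile l b 0 P V y
      = integral {0..y} (\<lambda>s. P * sigma l b s + V^2 * (sigma l b s * dsigma l b s))
        + V^2 * (sigma l b y)^2 / 2"
    by (simp add: Mprofile_def Mintegrand_def[abs_def] algebra_simps)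
  also have "\<dots> = P * integral {0..y} (sigma l b)
      + V^2 * integral {0..y} (\<lambda>s. sigma l b s * dsigma l b s) + V^2 * (sigma l b y)^2 / 2"
    by (simp add: integral_add int continuous_intros continuous_on_sigma continuous_on_dsigma)
  also have "\<dots> = P * integral {0..y} (sigma l b) + V^2 * ((sigma l b y)^2 - (sigma l b 0)^2 / 2)"
    unfolding integral_sigma_mult_dsigma[OF assms] by (simp add: field_simps)
  finally show ?thesis .
qed

lemma avg_Mprofile_zero_mult_dsigma:
  "avg l (\<lambda>y. Mprofile l b 0 P V y * dsigma l b y) = - chi l b * P"
proof -
  define F where "F y = integral {0..y} (sigma l b)" for y
  have "continuous_on {0..l} F"
    unfolding F_def[abs_def]
    by (intro indefinite_integral_continuous_1 integrable_continuous_real continuous_on_sigma)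
  then have int: "(\<lambda>y. F y * dsigma l b y) integrable_on {0..l}"
      "(\<lambda>y. ((sigma l b y)^2 - (sigma l b 0)^2 / 2) * dsigma l b y) integrable_on {0..l}"
    by (auto intro!: integrable_continuous_real continuous_intros continuous_on_sigma continuous_on_dsigma)
  have "avg l (\<lambda>y. Mprofile l b 0 P V y * dsigma l b y)
      = avg l (\<lambda>y. P * (F y * dsigma l b y) + V^2 * (((sigma l b y)^2 - (sigma l b 0)^2 / 2) * dsigma l b y))"
    unfolding avg_def F_def by (intro arg_cong[where f = "\<lambda>r. r / l"] integral_cong)
      (simp add: Mprofile_zero algebra_simps)
  also have "\<dots> = P * avg l (\<lambda>y. F y * dsigma l b y)
      + V^2 * avg l (\<lambda>y. ((sigma l b y)^2 - (sigma l b 0)^2 / 2) * dsigma l b y)"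
    by (rule avg_lincomb[OF int])
  also have "\<dots> = - chi l b * P"
    unfolding F_def by (simp add: avg_integral_sigma_mult_dsigma avg_sigma_square_diff_mult_dsigma)
  finally show ?thesis .
qed

lemma continuous_on_Mintegrand:
  assumes "\<forall>y\<in>{0..l}. T * dsigma l b y < 1"
  shows "continuous_on {0..l} (Mintegrand l b T P V)"
proof -
  have "\<forall>y\<in>{0..l}. 1 - T * dsigma l b y \<noteq> 0"
    using assms by force
  then show ?thesis
    unfolding Mintegrand_def[abs_def]
    by (intro continuous_intros continuous_on_sigma continuous_on_dsigma) auto
qed

lemma continuous_on_Mprofile:
  assumes "\<forall>y\<in>{0..l}. T * dsigma l b y < 1"
  shows "continuous_on {0..l} (Mprofile l b T P V)"
proof -
  have "\<forall>y\<in>{0..l}. 1 - T * dsigma l b y \<noteq> 0"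
    using assms by force
  then show ?thesis
    unfolding Mprofile_def[abs_def]
    by (intro continuous_intros indefinite_integral_continuous_1 integrable_continuous_real
        continuous_on_Mintegrand assms continuous_on_sigma continuous_on_dsigma) auto
qed

context
  fixes B :: real
  assumes b_le: "\<forall>y\<in>{0..l}. \<bar>b y\<bar> \<le> B"
begin

lemma abs_dsigma_le:
  assumes "y \<in> {0..l}"
  shows "\<bar>dsigma l b y\<bar> \<le> 2 * B"
proof -
  have "\<bar>avg l b\<bar> \<le> B"
    using b_le by (intro abs_avg_le l_pos b_cont) auto
  moreover have "\<bar>b y\<bar> \<le> B"
    using b_le assms by blast
  ultimately show ?thesis
    using abs_triangle_ineq4[of "b y" "avg l b"] by (simp add: dsigma_def)
qed

lemma abs_sigma_le:
  assumes "y \<in> {0..l}"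
  shows "\<bar>sigma l b y\<bar> \<le> 4 * B * l"
proof -
  have S_le: "\<bar>Sfun l b s\<bar> \<le> 2 * B * l" if s: "s \<in> {0..l}" for s
  proof -
    have "continuous_on {0..s} (dsigma l b)"
      using s by (intro continuous_on_subset[OF continuous_on_dsigma]) auto
    then have "norm (integral {0..s} (\<lambda>r. - dsigma l b r)) \<le> 2 * B * (s - 0)"
      using s abs_dsigma_le by (intro integral_bound continuous_intros) auto
    also have "\<dots> \<le> 2 * B * l"
      using s abs_dsigma_le[of 0] l_pos by (intro mult_left_mono) auto
    finally show ?thesis
      by (simp add: Sfun_def dsigma_def)
  qed
  moreover have "\<bar>avg l (Sfun l b)\<bar> \<le> 2 * B * l"
    using S_le by (intro abs_avg_le l_pos continuous_on_Sfun)
  ultimately show ?thesis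
    using assms by (fastforce simp: sigma_def)
qed

end

context
  fixes A G K T P V d :: real
  assumes sigma_le: "\<forall>y\<in>{0..l}. \<bar>sigma l b y\<bar> \<le> A"
    and dsigma_le: "\<forall>y\<in>{0..l}. \<bar>dsigma l b y\<bar> \<le> G"
    and small: "\<forall>y\<in>{0..l}. \<bar>T * dsigma l b y\<bar> \<le> d" and d_le: "d \<le> 1/2"
    and P_le: "\<bar>P\<bar> \<le> K" and V_le: "\<bar>V\<bar> \<le> K"
begin

lemma nonneg_bounds: "0 \<le> A" "0 \<le> G" "0 \<le> K" "0 \<le> d"
proof -
  have "\<bar>sigma l b 0\<bar> \<le> A" "\<bar>dsigma l b 0\<bar> \<le> G" "\<bar>T * dsigma l b 0\<bar> \<le> d"
    using sigma_le dsigma_le small l_pos by auto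
  with P_le show "0 \<le> A" "0 \<le> G" "0 \<le> K" "0 \<le> d"
    by (meson abs_ge_zero order_trans)+
qed

lemma T_dsigma_less_one: "\<forall>y\<in>{0..l}. T * dsigma l b y < 1"
  using small d_le by force

lemma abs_inverse_sub_one_le:
  assumes "s \<in> {0..l}"
  shows "\<bar>1 / (1 - T * dsigma l b s) - 1\<bar> \<le> 2 * d"
    and "\<bar>1 / (1 - T * dsigma l b s)^2 - 1\<bar> \<le> 10 * d"
proof -
  have r: "\<bar>T * dsigma l b s\<bar> \<le> d"
    using small assms by blast
  then have r_half: "\<bar>T * dsigma l b s\<bar> \<le> 1/2"
    using d_le by linarith
  show "\<bar>1 / (1 - T * dsigma l b s) - 1\<bar> \<le> 2 * d"
    using abs_inverse_one_minus_sub_one_le[OF r_half] r by linarith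
  show "\<bar>1 / (1 - T * dsigma l b s)^2 - 1\<bar> \<le> 10 * d"
    using abs_inverse_one_minus_square_sub_one_le[OF r_half] r by linarith
qed

lemma abs_V_square_le: "\<bar>V^2\<bar> \<le> K^2"
  using power_mono[OF V_le abs_ge_zero, of 2] by simp

lemma abs_Mintegrand_sub_Mintegrand_zero_le:
  assumes s: "s \<in> {0..l}"
  shows "\<bar>Mintegrand l b T P V s - Mintegrand l b 0 P V s\<bar> \<le> (2*A*K + 10*A*G*K^2) * d"
proof -
  have diff: "Mintegrand l b T P V s - Mintegrand l b 0 P V s
      = sigma l b s * P * (1 / (1 - T * dsigma l b s) - 1)
        + sigma l b s * dsigma l b s * V^2 * (1 / (1 - T * dsigma l b s)^2 - 1)"
    by (simp add: Mintegrand_def right_diff_distrib)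
  have "\<bar>sigma l b s * P * (1 / (1 - T * dsigma l b s) - 1)\<bar> \<le> A * K * (2 * d)"
    using sigma_le s P_le abs_inverse_sub_one_le(1)[OF s] by (intro abs_mult_le_mult) auto
  moreover have "\<bar>sigma l b s * dsigma l b s * V^2 * (1 / (1 - T * dsigma l b s)^2 - 1)\<bar>
      \<le> A * G * K^2 * (10 * d)"
    using sigma_le dsigma_le s abs_V_square_le abs_inverse_sub_one_le(2)[OF s]
    by (intro abs_mult_le_mult) auto
  ultimately have "\<bar>Mintegrand l b T P V s - Mintegrand l b 0 P V s\<bar>
      \<le> A * K * (2 * d) + A * G * K^2 * (10 * d)"
    unfolding diff by (rule abs_triangle_ineq[THEN order_trans, OF add_mono])
  also have "\<dots> = (2*A*K + 10*A*G*K^2) * d"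
    by (simp add: algebra_simps)
  finally show ?thesis .
qed

lemma abs_integral_Mintegrand_sub_le:
  assumes y: "y \<in> {0..l}"
  shows "\<bar>integral {0..y} (Mintegrand l b T P V) - integral {0..y} (Mintegrand l b 0 P V)\<bar>
    \<le> l * (2*A*K + 10*A*G*K^2) * d"
proof -
  have sub: "{0..y} \<subseteq> {0..l}" and zero: "\<forall>s\<in>{0..l}. 0 * dsigma l b s < 1"
    using y by auto
  have cont: "continuous_on {0..y} (Mintegrand l b T P V)" "continuous_on {0..y} (Mintegrand l b 0 P V)"
    using continuous_on_subset[OF continuous_on_Mintegrand[OF T_dsigma_less_one] sub]
      continuous_on_subset[OF continuous_on_Mintegrand[OF zero] sub] .
  have "integral {0..y} (Mintegrand l b T P V) - integral {0..y} (Mintegrand l b 0 P V)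
      = integral {0..y} (\<lambda>s. Mintegrand l b T P V s - Mintegrand l b 0 P V s)"
    by (intro integral_diff[symmetric] integrable_continuous_real cont)
  moreover have "norm (integral {0..y} (\<lambda>s. Mintegrand l b T P V s - Mintegrand l b 0 P V s))
      \<le> (2*A*K + 10*A*G*K^2) * d * (y - 0)"
    using y abs_Mintegrand_sub_Mintegrand_zero_le
    by (intro integral_bound continuous_intros cont) auto
  moreover have "(2*A*K + 10*A*G*K^2) * d * (y - 0) \<le> l * (2*A*K + 10*A*G*K^2) * d"
    using y nonneg_bounds mult_left_mono[of y l "(2*A*K + 10*A*G*K^2) * d"] by (simp add: mult_ac)
  ultimately show ?thesis
    by simp
qed

lemma abs_Mprofile_sub_Mprofile_zero_le:
  assumes y: "y \<in> {0..l}"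
  shows "\<bar>Mprofile l b T P V y - Mprofile l b 0 P V y\<bar>
    \<le> (l * (2*A*K + 10*A*G*K^2) + 5*A^2*K^2) * d"
proof -
  define q where "q = 1 - T * dsigma l b y"
  have "\<bar>(sigma l b y)^2\<bar> \<le> A^2"
    using power_mono[OF sigma_le[rule_format, OF y] abs_ge_zero, of 2] by simp
  then have "\<bar>(sigma l b y)^2 * V^2\<bar> \<le> A^2 * K^2"
    using abs_V_square_le by (rule abs_mult_le_mult)
  then have "\<bar>(sigma l b y)^2 * V^2 / 2\<bar> \<le> A^2 * K^2 / 2"
    by simp
  then have "\<bar>(sigma l b y)^2 * V^2 / 2 * (1 / q^2 - 1)\<bar> \<le> A^2 * K^2 / 2 * (10 * d)"
    unfolding q_def using abs_inverse_sub_one_le(2)[OF y] by (rule abs_mult_le_mult)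
  moreover have diff: "Mprofile l b T P V y - Mprofile l b 0 P V y
      = (integral {0..y} (Mintegrand l b T P V) - integral {0..y} (Mintegrand l b 0 P V))
        + (sigma l b y)^2 * V^2 / 2 * (1 / q^2 - 1)"
    by (simp add: Mprofile_def q_def right_diff_distrib)
  ultimately have "\<bar>Mprofile l b T P V y - Mprofile l b 0 P V y\<bar>
      \<le> l * (2*A*K + 10*A*G*K^2) * d + A^2 * K^2 / 2 * (10 * d)"
    unfolding diff using abs_integral_Mintegrand_sub_le[OF y]
    by (intro abs_triangle_ineq[THEN order_trans] add_mono)
  also have "\<dots> = (l * (2*A*K + 10*A*G*K^2) + 5*A^2*K^2) * d"
    by (simp add: algebra_simps)
  finally show ?thesis .
qed

lemma abs_avg_Mprofile_mult_dsigma_add_chi_le: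
  "\<bar>avg l (\<lambda>y. Mprofile l b T P V y * dsigma l b y) + chi l b * P\<bar>
    \<le> G * (l * (2*A*K + 10*A*G*K^2) + 5*A^2*K^2) * d"
proof -
  have cont: "continuous_on {0..l} (Mprofile l b T P V)" "continuous_on {0..l} (Mprofile l b 0 P V)"
    using T_dsigma_less_one by (auto intro: continuous_on_Mprofile)
  then have "avg l (\<lambda>y. (Mprofile l b T P V y - Mprofile l b 0 P V y) * dsigma l b y)
      = avg l (\<lambda>y. Mprofile l b T P V y * dsigma l b y) - avg l (\<lambda>y. Mprofile l b 0 P V y * dsigma l b y)"
    using avg_lincomb[of _ l _ 1 "-1"]
    by (simp add: left_diff_distrib integrable_continuous_real continuous_intros continuous_on_dsigma)
  then have "avg l (\<lambda>y. Mprofile l b T P V y * dsigma l b y) + chi l b * P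
      = avg l (\<lambda>y. (Mprofile l b T P V y - Mprofile l b 0 P V y) * dsigma l b y)"
    by (simp add: avg_Mprofile_zero_mult_dsigma)
  also have "\<bar>\<dots>\<bar> \<le> G * (l * (2*A*K + 10*A*G*K^2) + 5*A^2*K^2) * d"
  proof (rule abs_avg_le[OF l_pos])
    show "continuous_on {0..l} (\<lambda>y. (Mprofile l b T P V y - Mprofile l b 0 P V y) * dsigma l b y)"
      by (intro continuous_intros cont continuous_on_dsigma)
  next
    fix y assume "y \<in> {0..l}"
    then show "\<bar>(Mprofile l b T P V y - Mprofile l b 0 P V y) * dsigma l b y\<bar>
        \<le> G * (l * (2*A*K + 10*A*G*K^2) + 5*A^2*K^2) * d"
      using abs_mult_le_mult[OF abs_Mprofile_sub_Mprofile_zero_le dsigma_le[rule_format]]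
      by (simp add: mult_ac)
  qed
  finally show ?thesis .
qed

end

end

lemma deriv_cmult_real:
  fixes f :: "real \<Rightarrow> real"
  assumes "f differentiable at r"
  shows "deriv (\<lambda>s. c * f s) r = c * deriv f r"
proof -
  have "(f has_real_derivative deriv f r) (at r)"
    using assms by (simp add: DERIV_deriv_iff_real_differentiable)
  then show ?thesis
    by (intro DERIV_imp_deriv DERIV_cmult)
qed

lemma EL_eq_chi_mult:
  assumes "(\<lambda>s. matdot u tau s x) differentiable at t" and "(\<lambda>z. matdot u tau t z) differentiable at x"
  shows "EL l b tau u t x = chi l b * matdot u (matdot u tau) t x"
proof -
  have deriv_Lag_tau: "deriv (\<lambda>p. Lag l b p q) p0 = 0" for p0 q
    by (simp add: Lag_def)
  have deriv_Lag_taudot: "deriv (\<lambda>q. Lag l b p q) q0 = - chi l b * q0" for p q0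
    unfolding Lag_def by (rule DERIV_imp_deriv) (auto intro!: derivative_eq_intros simp: power2_eq_square)
  have "EL l b tau u t x = - matdot u (\<lambda>t' x'. - chi l b * matdot u tau t' x') t x"
    by (simp add: EL_def deriv_Lag_tau deriv_Lag_taudot)
  also have "\<dots> = - (deriv (\<lambda>s. - chi l b * matdot u tau s x) t
      + u t x * deriv (\<lambda>z. - chi l b * matdot u tau t z) x)"
    by (simp only: matdot_def[of u "\<lambda>t' x'. - chi l b * matdot u tau t' x'"])
  also have "\<dots> = chi l b * matdot u (matdot u tau) t x"
    unfolding deriv_cmult_real[OF assms(1)] deriv_cmult_real[OF assms(2)]
    by (simp add: matdot_def[of u "matdot u tau"] algebra_simps)
  finally show ?thesis .
qed

lemma eventually_mult_powr_le_half:
  fixes C \<gamma> :: real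
  assumes "\<gamma> > 0"
  shows "\<forall>\<^sub>F \<epsilon> in at_right 0. C * \<epsilon> powr \<gamma> \<le> 1/2"
proof -
  have "((\<lambda>\<epsilon>. \<epsilon> powr \<gamma>) \<longlongrightarrow> 0) (at_right (0::real))"
    using assms eventually_at_right_less[of 0]
    by (intro tendsto_zero_powrI tendsto_ident_at tendsto_const) (auto elim: eventually_mono)
  then have "((\<lambda>\<epsilon>. C * \<epsilon> powr \<gamma>) \<longlongrightarrow> 0) (at_right (0::real))"
    by (rule tendsto_mult_right_zero)
  then have "\<forall>\<^sub>F \<epsilon> in at_right 0. C * \<epsilon> powr \<gamma> < 1/2"
    by (rule order_tendstoD(2)) simp
  then show ?thesis
    by eventually_elim simp
qed

lemma abs_avg_Mfun_mult_dsigma_add_EL_le: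
  assumes "l > 0" and "continuous_on {0..l} b"
    and "\<forall>y\<in>{0..l}. \<bar>sigma l b y\<bar> \<le> A" and "\<forall>y\<in>{0..l}. \<bar>dsigma l b y\<bar> \<le> G"
    and "\<forall>y\<in>{0..l}. \<bar>tau t x * dsigma l b y\<bar> \<le> d" and "d \<le> 1/2"
    and "\<bar>matdot u (matdot u tau) t x\<bar> \<le> K" and "\<bar>matdot u tau t x\<bar> \<le> K"
    and "(\<lambda>s. matdot u tau s x) differentiable at t" and "(\<lambda>z. matdot u tau t z) differentiable at x"
  shows "\<bar>avg l (\<lambda>y. Mfun l b tau u t x y * dsigma l b y) - (- EL l b tau u t x)\<bar>
    \<le> G * (l * (2*A*K + 10*A*G*K^2) + 5*A^2*K^2) * d"
  using abs_avg_Mprofile_mult_dsigma_add_chi_le[OF assms(1-8)] EL_eq_chi_mult[OF assms(9,10)]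
  by (simp add: Mfun_eq_Mprofile)

theorem proposition2:
  fixes l \<gamma> :: real
    and b :: "real \<Rightarrow> real \<Rightarrow> real"
    and tau u :: "real \<Rightarrow> real \<Rightarrow> real \<Rightarrow> real"
  assumes l_pos: "l > 0"
    and gamma_pos: "\<gamma> > 0"
    and b_cont: "\<forall>\<epsilon>>0. continuous_on {0..l} (b \<epsilon>)"
    and b_bounded: "\<exists>B. \<forall>\<^sub>F \<epsilon> in at_right 0. \<forall>y\<in>{0..l}. \<bar>b \<epsilon> y\<bar> \<le> B"
    and tau_pos: "\<forall>\<epsilon>>0. \<forall>t x. tau \<epsilon> t x > 0"
    and smooth: "\<forall>\<epsilon>>0. \<forall>t x.
        (\<lambda>s. tau \<epsilon> s x) differentiable at t \<and> (\<lambda>z. tau \<epsilon> t z) differentiable at x \<and>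
        (\<lambda>s. u \<epsilon> s x) differentiable at t \<and> (\<lambda>z. u \<epsilon> t z) differentiable at x \<and>
        (\<lambda>s. matdot (u \<epsilon>) (tau \<epsilon>) s x) differentiable at t \<and>
        (\<lambda>z. matdot (u \<epsilon>) (tau \<epsilon>) t z) differentiable at x"
    and nondeg: "\<forall>\<epsilon>>0. \<forall>t x. \<forall>y\<in>{0..l}. 1 - tau \<epsilon> t x * dsigma l (b \<epsilon>) y > 0"
    and wide: "\<exists>C. \<forall>\<^sub>F \<epsilon> in at_right 0. \<forall>t x. \<forall>y\<in>{0..l}.
        \<bar>tau \<epsilon> t x * dsigma l (b \<epsilon>) y\<bar> \<le> C * \<epsilon> powr \<gamma>"
    and dots_bounded: "\<exists>B. \<forall>\<^sub>F \<epsilon> in at_right 0. \<forall>t x.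
        \<bar>matdot (u \<epsilon>) (tau \<epsilon>) t x\<bar> \<le> B \<and>
        \<bar>matdot (u \<epsilon>) (matdot (u \<epsilon>) (tau \<epsilon>)) t x\<bar> \<le> B"
  shows "\<exists>C. \<forall>\<^sub>F \<epsilon> in at_right 0. \<forall>t x.
        \<bar>avg l (\<lambda>y. Mfun l (b \<epsilon>) (tau \<epsilon>) (u \<epsilon>) t x y * dsigma l (b \<epsilon>) y)
          - (- EL l (b \<epsilon>) (tau \<epsilon>) (u \<epsilon>) t x)\<bar> \<le> C * \<epsilon> powr \<gamma>"
proof -
  obtain B where B: "\<forall>\<^sub>F \<epsilon> in at_right 0. \<forall>y\<in>{0..l}. \<bar>b \<epsilon> y\<bar> \<le> B"
    using b_bounded by blast
  obtain C where C: "\<forall>\<^sub>F \<epsilon> in at_right 0. \<forall>t x. \<forall>y\<in>{0..l}.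
      \<bar>tau \<epsilon> t x * dsigma l (b \<epsilon>) y\<bar> \<le> C * \<epsilon> powr \<gamma>"
    using wide by blast
  obtain K where K: "\<forall>\<^sub>F \<epsilon> in at_right 0. \<forall>t x.
      \<bar>matdot (u \<epsilon>) (tau \<epsilon>) t x\<bar> \<le> K \<and> \<bar>matdot (u \<epsilon>) (matdot (u \<epsilon>) (tau \<epsilon>)) t x\<bar> \<le> K"
    using dots_bounded by blast
  define A G where "A = 4 * B * l" and "G = 2 * B"
  have "\<forall>\<^sub>F \<epsilon> in at_right 0. \<forall>t x.
      \<bar>avg l (\<lambda>y. Mfun l (b \<epsilon>) (tau \<epsilon>) (u \<epsilon>) t x y * dsigma l (b \<epsilon>) y)
        - (- EL l (b \<epsilon>) (tau \<epsilon>) (u \<epsilon>) t x)\<bar>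
      \<le> G * (l * (2*A*K + 10*A*G*K^2) + 5*A^2*K^2) * (C * \<epsilon> powr \<gamma>)"
    using B C K eventually_mult_powr_le_half[OF gamma_pos, of C] eventually_at_right_less[of 0]
  proof eventually_elim
    case (elim \<epsilon>)
    then have b_cont\<epsilon>: "continuous_on {0..l} (b \<epsilon>)"
      using b_cont by blast
    show ?case
      unfolding A_def G_def
      using elim smooth abs_sigma_le[OF l_pos b_cont\<epsilon>] abs_dsigma_le[OF l_pos b_cont\<epsilon>]
      by (intro allI abs_avg_Mfun_mult_dsigma_add_EL_le l_pos b_cont\<epsilon>) auto
  qed
  then show ?thesis
    by (intro exI[where x = "G * (l * (2*A*K + 10*A*G*K^2) + 5*A^2*K^2) * C"]) (simp only: mult.assoc)
qed

end
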